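(* Let $a\in G$ and define $\psi(x,y,v)=K_{a,v}(x,y)$ for $x\in G$, $y,v\in Y$. Then $\psi\in\mathcal A$ and $\rho(a)=S_\psi$.
   Context: Let $G$ be a locally compact abelian group (written additively) with Haar measure $\nu$, and $(Y,\lambda)$ a measure space. Let $H$ be a reproducing kernel Hilbert space of complex functions on $G\times Y$ whose inner product is that of $L^2(G\times Y,\nu\otimes\lambda)$, with reproducing kernel $(K_{x,y})_{(x,y)\in G\times Y}$ (so $f(x,y)=\langle f,K_{x,y}\rangle$). Assume $K_{x,y}(u,v)=K_{0,y}(u-x,v)$ for all $u,x\in G$, $v,y\in Y$. For $a\in G$ let $(\rho(a)f)(x,y)=f(x-a,y)$, a unitary operator on $H$. Let $\mathcal A_0$ be the set of functions $\psi\colon G\times Y\times Y\to\mathbb C$ such that $\psi(\cdot,\cdot,v)\in H$ for every $v\in Y$ and $(u,v)\mapsto\overline{\psi(-u,y,v)}$ belongs to $H$ for every $y\in Y$. For $\psi\in\mathcal A_0$, $f\in H$, define $(S_\psi f)(x,y)=\int_{G\times Y}f(u,v)\psi(x-u,y,v)\,d\nu(u)\,d\lambda(v)$. Let $\mathcal A$ be the set of $\psi\in\mathcal A_0$ such that $S_\psi f\in H$ for all $f\in H$ and $S_\psi$ is bounded on $H$. *)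

theory Defs
  imports "HOL-Analysis.Analysis"
begin

definition lca_group :: "'g::{ab_group_add, t2_space} itself \<Rightarrow> bool" where
  "lca_group _ \<longleftrightarrow>
     locally_compact_space (euclidean :: 'g topology) \<and>
     continuous_on UNIV (\<lambda>p::'g \<times> 'g. fst p + snd p) \<and>
     continuous_on UNIV (\<lambda>x::'g. - x)"

definition haar_measure :: "'g::{ab_group_add, t2_space} measure \<Rightarrow> bool" where
  "haar_measure nu \<longleftrightarrow>
     sets nu = sets borel \<and>
     (\<forall>a. \<forall>A\<in>sets borel. emeasure nu ((\<lambda>x. a + x) ` A) = emeasure nu A) \<and>
     (\<forall>C. compact C \<longrightarrow> emeasure nu C < \<infinity>) \<and>
     (\<forall>A\<in>sets borel. emeasure nu A = (INF U\<in>{U. open U \<and> A \<subseteq> U}. emeasure nu U)) \<and>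
     (\<forall>U. open U \<longrightarrow> emeasure nu U = (SUP C\<in>{C. compact C \<and> C \<subseteq> U}. emeasure nu C)) \<and>
     emeasure nu UNIV \<noteq> 0"

abbreviation prodM :: "'g::{ab_group_add, t2_space} measure \<Rightarrow> 'y measure \<Rightarrow> ('g \<times> 'y) measure" where
  "prodM nu lam \<equiv> nu \<Otimes>\<^sub>M lam"

definition L2inner :: "('g \<times> 'y) measure \<Rightarrow> ('g \<times> 'y \<Rightarrow> complex) \<Rightarrow> ('g \<times> 'y \<Rightarrow> complex) \<Rightarrow> complex" where
  "L2inner M f g = (LINT z|M. f z * cnj (g z))"

definition L2norm :: "('g \<times> 'y) measure \<Rightarrow> ('g \<times> 'y \<Rightarrow> complex) \<Rightarrow> real" where
  "L2norm M f = sqrt (LINT z|M. (cmod (f z))\<^sup>2)"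

definition square_integrable :: "('g \<times> 'y) measure \<Rightarrow> ('g \<times> 'y \<Rightarrow> complex) \<Rightarrow> bool" where
  "square_integrable M f \<longleftrightarrow> f \<in> borel_measurable M \<and> integrable M (\<lambda>z. (cmod (f z))\<^sup>2)"

text \<open>Membership in H of a function considered only on G \<times> Y (Y = space lam).\<close>
definition memH :: "('g \<times> 'y \<Rightarrow> complex) set \<Rightarrow> 'y set \<Rightarrow> ('g \<times> 'y \<Rightarrow> complex) \<Rightarrow> bool" where
  "memH H Y f \<longleftrightarrow> (\<exists>h\<in>H. \<forall>x. \<forall>y\<in>Y. h (x, y) = f (x, y))"

text \<open>H is a reproducing kernel Hilbert space of functions on G \<times> Y with the L^2 inner product,
  with reproducing kernel K (K x y = K_{x,y}).\<close>
definition rkhs :: "'g::{ab_group_add, t2_space} measure \<Rightarrow> 'y measure \<Rightarrow> ('g \<times> 'y \<Rightarrow> complex) set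
                     \<Rightarrow> ('g \<Rightarrow> 'y \<Rightarrow> 'g \<times> 'y \<Rightarrow> complex) \<Rightarrow> bool" where
  "rkhs nu lam H K \<longleftrightarrow>
     (\<forall>f\<in>H. square_integrable (prodM nu lam) f) \<and>
     (\<lambda>_. 0) \<in> H \<and>
     (\<forall>f\<in>H. \<forall>g\<in>H. (\<lambda>z. f z + g z) \<in> H) \<and>
     (\<forall>c. \<forall>f\<in>H. (\<lambda>z. c * f z) \<in> H) \<and>
     (\<forall>F :: nat \<Rightarrow> ('g \<times> 'y \<Rightarrow> complex). (\<forall>n. F n \<in> H) \<and>
        (\<forall>e>0. \<exists>N. \<forall>m\<ge>N. \<forall>n\<ge>N. L2norm (prodM nu lam) (\<lambda>z. F m z - F n z) < e) \<longrightarrow>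
        (\<exists>f\<in>H. (\<lambda>n. L2norm (prodM nu lam) (\<lambda>z. F n z - f z)) \<longlonglongrightarrow> 0)) \<and>
     (\<forall>x. \<forall>y\<in>space lam. K x y \<in> H) \<and>
     (\<forall>f\<in>H. \<forall>x. \<forall>y\<in>space lam. f (x, y) = L2inner (prodM nu lam) f (K x y))"

text \<open>The operator S_\<psi>, with \<psi> : G \<times> Y \<times> Y \<rightarrow> C written curried.\<close>
definition S_op :: "'g::{ab_group_add, t2_space} measure \<Rightarrow> 'y measure \<Rightarrow> ('g \<Rightarrow> 'y \<Rightarrow> 'y \<Rightarrow> complex)
                    \<Rightarrow> ('g \<times> 'y \<Rightarrow> complex) \<Rightarrow> ('g \<times> 'y \<Rightarrow> complex)" where
  "S_op nu lam \<psi> f = (\<lambda>(x, y). LINT z|prodM nu lam. f z * \<psi> (x - fst z) y (snd z))"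

definition in_A0 :: "'y measure \<Rightarrow> ('g::{ab_group_add, t2_space} \<times> 'y \<Rightarrow> complex) set
                     \<Rightarrow> ('g \<Rightarrow> 'y \<Rightarrow> 'y \<Rightarrow> complex) \<Rightarrow> bool" where
  "in_A0 lam H \<psi> \<longleftrightarrow>
     (\<forall>v\<in>space lam. memH H (space lam) (\<lambda>(x, y). \<psi> x y v)) \<and>
     (\<forall>y\<in>space lam. memH H (space lam) (\<lambda>(u, v). cnj (\<psi> (- u) y v)))"

definition in_A :: "'g::{ab_group_add, t2_space} measure \<Rightarrow> 'y measure \<Rightarrow> ('g \<times> 'y \<Rightarrow> complex) set
                    \<Rightarrow> ('g \<Rightarrow> 'y \<Rightarrow> 'y \<Rightarrow> complex) \<Rightarrow> bool" where
  "in_A nu lam H \<psi> \<longleftrightarrow>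
     in_A0 lam H \<psi> \<and>
     (\<forall>f\<in>H. memH H (space lam) (S_op nu lam \<psi> f)) \<and>
     (\<exists>C. \<forall>f\<in>H. L2norm (prodM nu lam) (S_op nu lam \<psi> f) \<le> C * L2norm (prodM nu lam) f)"

end

theory Submission
  imports Defs
begin

text \<open>Kernel symmetry and covariance give cnj (K (x - a) y (u, v)) = K a v (x - u, y), so
  S_\<psi> f (x, y) is the reproducing formula for f (x - a, y); the same identities show \<psi> \<in> A0.
  What remains is that the translate g of f lies in H again. Haar invariance makes g square
  integrable with the norm of f and preserves the reproducing property g (x, y) = <g, K x y>.
  A square-integrable function with that property agrees on G \<times> Y with its best approximation h
  from H, which exists because H is complete: minimality of h makes g - h orthogonal to every
  kernel, and <g - h, K x y> = g (x, y) - h (x, y).\<close>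

section \<open>Square-integrable functions\<close>

lemma borel_measurable_cnj [measurable]:
  "f \<in> borel_measurable M \<Longrightarrow> (\<lambda>x. cnj (f x)) \<in> borel_measurable M"
  using measurable_compose borel_measurable_continuous_onI[OF continuous_on_cnj[OF continuous_on_id]]
  by blast

definition L2norm_sq :: "'a measure \<Rightarrow> ('a \<Rightarrow> complex) \<Rightarrow> real" where
  "L2norm_sq M f = (LINT z|M. (cmod (f z))\<^sup>2)"

lemma L2norm_eq_sqrt: "L2norm M f = sqrt (L2norm_sq M f)"
  by (simp add: L2norm_def L2norm_sq_def)

lemma L2norm_sq_nonneg: "0 \<le> L2norm_sq M f"
  by (simp add: L2norm_sq_def)

lemma L2norm_sq_cmult: "L2norm_sq M (\<lambda>z. c * f z) = (cmod c)\<^sup>2 * L2norm_sq M f"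
  by (simp add: L2norm_sq_def norm_mult power_mult_distrib)

lemma cmod_add_sq_le: "(cmod (a + b))\<^sup>2 \<le> 2 * (cmod a)\<^sup>2 + 2 * (cmod b)\<^sup>2"
proof -
  have "(cmod (a + b))\<^sup>2 \<le> (cmod a + cmod b)\<^sup>2"
    by (simp add: norm_triangle_ineq power_mono)
  also have "\<dots> \<le> 2 * (cmod a)\<^sup>2 + 2 * (cmod b)\<^sup>2"
    using sum_squares_bound[of "cmod a" "cmod b"] by (simp add: power2_sum)
  finally show ?thesis .
qed

lemma square_integrable_add:
  assumes f: "square_integrable M f" and g: "square_integrable M g"
  shows "square_integrable M (\<lambda>z. f z + g z)"
  unfolding square_integrable_def
proof
  show "(\<lambda>z. f z + g z) \<in> borel_measurable M"
    using f g by (auto simp: square_integrable_def)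
  show "integrable M (\<lambda>z. (cmod (f z + g z))\<^sup>2)"
  proof (rule Bochner_Integration.integrable_bound)
    show "integrable M (\<lambda>z. 2 * (cmod (f z))\<^sup>2 + 2 * (cmod (g z))\<^sup>2)"
      using f g by (simp add: square_integrable_def)
    show "(\<lambda>z. (cmod (f z + g z))\<^sup>2) \<in> borel_measurable M"
      using f g by (auto simp: square_integrable_def)
    show "AE z in M. norm ((cmod (f z + g z))\<^sup>2) \<le> norm (2 * (cmod (f z))\<^sup>2 + 2 * (cmod (g z))\<^sup>2)"
      using cmod_add_sq_le by (auto intro!: AE_I2 simp del: norm_mult)
  qed
qed

lemma square_integrable_cmult:
  "square_integrable M f \<Longrightarrow> square_integrable M (\<lambda>z. c * f z)"
  by (auto simp: square_integrable_def norm_mult power_mult_distrib)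

lemma square_integrable_diff:
  assumes "square_integrable M f" "square_integrable M g"
  shows "square_integrable M (\<lambda>z. f z - g z)"
  using square_integrable_add[OF assms(1) square_integrable_cmult[OF assms(2), of "-1"]] by simp

lemma integrable_L2inner_integrand:
  assumes f: "square_integrable M f" and g: "square_integrable M g"
  shows "integrable M (\<lambda>z. f z * cnj (g z))"
proof (rule Bochner_Integration.integrable_bound)
  show "integrable M (\<lambda>z. (cmod (f z))\<^sup>2 + (cmod (g z))\<^sup>2)"
    using f g by (simp add: square_integrable_def)
  have "cmod (a * cnj b) \<le> (cmod a)\<^sup>2 + (cmod b)\<^sup>2" for a b :: complex
  proof -
    have "0 \<le> cmod a * cmod b" by simp
    then show ?thesis
      unfolding norm_mult complex_mod_cnj using sum_squares_bound[of "cmod a" "cmod b"] by linarith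
  qed
  then show "AE z in M. norm (f z * cnj (g z)) \<le> norm ((cmod (f z))\<^sup>2 + (cmod (g z))\<^sup>2)"
    by simp
qed (use f g in \<open>auto simp: square_integrable_def\<close>)

lemma L2inner_diff_left:
  assumes "square_integrable M f" "square_integrable M g" "square_integrable M k"
  shows "L2inner M (\<lambda>z. f z - g z) k = L2inner M f k - L2inner M g k"
  using Bochner_Integration.integral_diff[OF integrable_L2inner_integrand[OF assms(1,3)]
      integrable_L2inner_integrand[OF assms(2,3)]]
  by (simp add: L2inner_def left_diff_distrib)

lemma L2norm_sq_diff_cmult:
  assumes w: "square_integrable M w" and k: "square_integrable M k"
  shows "L2norm_sq M (\<lambda>z. w z - t * k z) =
    L2norm_sq M w - 2 * Re (cnj t * L2inner M w k) + (cmod t)\<^sup>2 * L2norm_sq M k"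
proof -
  have expand: "(cmod (a - t * b))\<^sup>2 = (cmod a)\<^sup>2 - 2 * Re (cnj t * (a * cnj b)) + (cmod t)\<^sup>2 * (cmod b)\<^sup>2"
    for a b :: complex
    unfolding cmod_power2 by (simp add: power2_eq_square algebra_simps)
  have wk: "integrable M (\<lambda>z. cnj t * (w z * cnj (k z)))"
    using integrable_L2inner_integrand[OF w k] by simp
  have i1: "integrable M (\<lambda>z. (cmod (w z))\<^sup>2)" and i3: "integrable M (\<lambda>z. (cmod t)\<^sup>2 * (cmod (k z))\<^sup>2)"
    using w k by (simp_all add: square_integrable_def)
  have i2: "integrable M (\<lambda>z. 2 * Re (cnj t * (w z * cnj (k z))))"
    by (intro integrable_mult_right integrable_Re wk)
  have "(LINT z|M. 2 * Re (cnj t * (w z * cnj (k z)))) = 2 * Re (CLINT z|M. cnj t * (w z * cnj (k z)))"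
    by (simp only: integral_mult_right_zero integral_Re[OF wk])
  also have "\<dots> = 2 * Re (cnj t * L2inner M w k)"
    by (simp add: L2inner_def)
  finally have inner: "(LINT z|M. 2 * Re (cnj t * (w z * cnj (k z)))) = 2 * Re (cnj t * L2inner M w k)" .
  have "L2norm_sq M (\<lambda>z. w z - t * k z) =
      (LINT z|M. (cmod (w z))\<^sup>2 - 2 * Re (cnj t * (w z * cnj (k z)))) + (LINT z|M. (cmod t)\<^sup>2 * (cmod (k z))\<^sup>2)"
    unfolding L2norm_sq_def expand
    by (rule Bochner_Integration.integral_add[OF Bochner_Integration.integrable_diff[OF i1 i2] i3])
  also have "\<dots> = L2norm_sq M w - 2 * Re (cnj t * L2inner M w k) + (cmod t)\<^sup>2 * L2norm_sq M k"
    unfolding L2norm_sq_def Bochner_Integration.integral_diff[OF i1 i2] inner by simp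
  finally show ?thesis .
qed

lemma L2norm_sq_parallelogram:
  assumes u: "square_integrable M u" and v: "square_integrable M v"
  shows "L2norm_sq M (\<lambda>z. u z - v z) =
    2 * L2norm_sq M u + 2 * L2norm_sq M v - L2norm_sq M (\<lambda>z. u z + v z)"
proof -
  have law: "(cmod (a - b))\<^sup>2 = (2 * (cmod a)\<^sup>2 + 2 * (cmod b)\<^sup>2) - (cmod (a + b))\<^sup>2" for a b :: complex
    unfolding cmod_power2 by (simp add: power2_eq_square algebra_simps)
  have i: "integrable M (\<lambda>z. 2 * (cmod (u z))\<^sup>2)" "integrable M (\<lambda>z. 2 * (cmod (v z))\<^sup>2)"
    "integrable M (\<lambda>z. (cmod (u z + v z))\<^sup>2)"
    using u v square_integrable_add[OF u v] by (simp_all add: square_integrable_def)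
  show ?thesis
    unfolding L2norm_sq_def law
    by (simp add: Bochner_Integration.integral_diff[OF Bochner_Integration.integrable_add[OF i(1,2)] i(3)]
        Bochner_Integration.integral_add[OF i(1,2)])
qed

text \<open>Testing with t = <w, k> / (N + 1) instead of <w, k> / N, where N is the squared norm
  of k, keeps the argument valid when k = 0.\<close>
lemma L2inner_sq_le_if_near_minimal:
  assumes w: "square_integrable M w" and k: "square_integrable M k"
    and near: "\<And>t. L2norm_sq M w - e \<le> L2norm_sq M (\<lambda>z. w z - t * k z)"
  shows "(cmod (L2inner M w k))\<^sup>2 \<le> (L2norm_sq M k + 1) * e"
proof -
  define N where "N = L2norm_sq M k"
  define c where "c = L2inner M w k"
  define s where "s = 1 / (N + 1)"
  have N: "N \<ge> 0" by (simp add: N_def L2norm_sq_nonneg)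
  then have s: "s > 0" "s * N \<le> 1" by (simp_all add: s_def)
  have "Re (cnj (of_real s * c) * c) = s * (cmod c)\<^sup>2"
    unfolding cmod_power2 by (simp add: power2_eq_square algebra_simps)
  moreover have "(cmod (of_real s * c))\<^sup>2 = s\<^sup>2 * (cmod c)\<^sup>2"
    using s(1) by (simp add: norm_mult power_mult_distrib)
  ultimately have "L2norm_sq M w - e \<le> L2norm_sq M w - 2 * (s * (cmod c)\<^sup>2) + s\<^sup>2 * (cmod c)\<^sup>2 * N"
    using near[of "of_real s * c"] unfolding L2norm_sq_diff_cmult[OF w k] N_def c_def by simp
  then have "s * (cmod c)\<^sup>2 * (2 - s * N) \<le> e"
    by (simp add: power2_eq_square algebra_simps)
  moreover have "s * (cmod c)\<^sup>2 * 1 \<le> s * (cmod c)\<^sup>2 * (2 - s * N)"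
    using s by (intro mult_left_mono) auto
  ultimately have "s * (cmod c)\<^sup>2 \<le> e" by linarith
  then show ?thesis
    using N by (simp add: s_def N_def c_def field_simps)
qed

lemma L2inner_sq_le:
  assumes "square_integrable M w" "square_integrable M k"
  shows "(cmod (L2inner M w k))\<^sup>2 \<le> (L2norm_sq M k + 1) * L2norm_sq M w"
  using L2inner_sq_le_if_near_minimal[OF assms] by (simp add: L2norm_sq_nonneg)

section \<open>Translation invariance of Haar measure\<close>

locale lca_haar =
  fixes nu :: "'g::{ab_group_add, t2_space} measure"
  assumes lca: "lca_group TYPE('g)" and haar: "haar_measure nu"
begin

lemma sets_eq_borel: "sets nu = sets borel"
  using haar by (simp add: haar_measure_def)

lemma space_eq_UNIV: "space nu = UNIV"
  using sets_eq_imp_space_eq[OF sets_eq_borel] by simp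

lemma measurable_translate: "(\<lambda>x. x + b) \<in> nu \<rightarrow>\<^sub>M nu"
proof -
  have "continuous_on UNIV (\<lambda>p::'g \<times> 'g. fst p + snd p)"
    using lca by (simp add: lca_group_def)
  then have "continuous_on UNIV (\<lambda>x::'g. x + b)"
    using continuous_on_compose2[of UNIV "\<lambda>p::'g \<times> 'g. fst p + snd p" UNIV "\<lambda>x. (x, b)"]
    by (simp add: continuous_on_Pair continuous_on_id continuous_on_const)
  then show ?thesis
    using borel_measurable_continuous_onI measurable_cong_sets[OF sets_eq_borel sets_eq_borel]
    by blast
qed

lemma emeasure_translate: "A \<in> sets borel \<Longrightarrow> emeasure nu ((\<lambda>x. a + x) ` A) = emeasure nu A"
  using haar unfolding haar_measure_def by (elim conjE) blast

lemma distr_translate: "distr nu nu (\<lambda>x. x + b) = nu"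
proof (rule measure_eqI)
  fix A assume "A \<in> sets (distr nu nu (\<lambda>x. x + b))"
  then have A: "A \<in> sets borel"
    using sets_eq_borel by simp
  have preimage: "(\<lambda>x. x + b) -` A \<inter> space nu = (\<lambda>x. - b + x) ` A"
    by (auto simp: space_eq_UNIV image_iff) (metis add.commute diff_add_cancel diff_conv_add_uminus)
  have "emeasure (distr nu nu (\<lambda>x. x + b)) A = emeasure nu ((\<lambda>x. x + b) -` A \<inter> space nu)"
    by (rule emeasure_distr[OF measurable_translate]) (simp add: A sets_eq_borel)
  also have "\<dots> = emeasure nu A"
    unfolding preimage by (rule emeasure_translate[OF A])
  finally show "emeasure (distr nu nu (\<lambda>x. x + b)) A = emeasure nu A" .
qed simp

text \<open>No measurability of F is assumed, so the integral is compared through its defining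
  supremum over simple functions.\<close>
lemma nn_integral_translate_le: "(\<integral>\<^sup>+x. F (x + b) \<partial>nu) \<le> (\<integral>\<^sup>+x. F x \<partial>nu)"
  unfolding nn_integral_def[of nu "\<lambda>x. F (x + b)"]
proof (rule SUP_least)
  fix s assume "s \<in> {s. simple_function nu s \<and> s \<le> (\<lambda>x. F (x + b))}"
  then have s: "simple_function nu s" "\<And>x. s x \<le> F (x + b)"
    by (auto simp: le_fun_def)
  define s' where "s' = (\<lambda>x. s (x - b))"
  have s': "simple_function nu s'"
    using simple_function_comp[OF measurable_translate[of "- b"] s(1)] by (simp add: s'_def)
  have "integral\<^sup>S nu s = (\<integral>\<^sup>+x. s' (x + b) \<partial>nu)"
    by (simp add: s'_def nn_integral_eq_simple_integral[OF s(1)])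
  also have "\<dots> = (\<integral>\<^sup>+x. s' x \<partial>distr nu nu (\<lambda>x. x + b))"
    using borel_measurable_simple_function[OF s']
    by (simp add: nn_integral_distr measurable_translate)
  also have "\<dots> \<le> (\<integral>\<^sup>+x. F x \<partial>nu)"
    using s(2)[of "_ - b"] by (auto simp: distr_translate s'_def intro!: nn_integral_mono)
  finally show "integral\<^sup>S nu s \<le> (\<integral>\<^sup>+x. F x \<partial>nu)" .
qed

lemma nn_integral_translate: "(\<integral>\<^sup>+x. F (x + b) \<partial>nu) = (\<integral>\<^sup>+x. F x \<partial>nu)"
  using nn_integral_translate_le[of F b] nn_integral_translate_le[of "\<lambda>x. F (x + b)" "- b"]
  by (simp add: antisym)

lemma measurable_translate_fst:
  "(\<lambda>z. (fst z + b, snd z)) \<in> nu \<Otimes>\<^sub>M lam \<rightarrow>\<^sub>M nu \<Otimes>\<^sub>M lam"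
  by (intro measurable_Pair measurable_compose[OF measurable_fst measurable_translate] measurable_snd)

text \<open>Since lam need not be sigma-finite, emeasure_pair_measure is not available. By definition,
  however, the product measure is the iterated integral of indicators if that is a measure, and 0
  otherwise; the iterated integral is invariant under translation of the first coordinate.\<close>
lemma distr_translate_fst:
  "distr (nu \<Otimes>\<^sub>M lam) (nu \<Otimes>\<^sub>M lam) (\<lambda>z. (fst z + b, snd z)) = nu \<Otimes>\<^sub>M lam"
    (is "distr ?M ?M ?t = ?M")
proof (rule measure_eqI)
  let ?\<mu> = "\<lambda>X. \<integral>\<^sup>+x. \<integral>\<^sup>+y. indicator X (x, y) \<partial>lam \<partial>nu"
  let ?E = "{A \<times> B | A B. A \<in> sets nu \<and> B \<in> sets lam}"
  let ?\<Omega> = "space nu \<times> space lam"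
  have sets_M: "sets ?M = sigma_sets ?\<Omega> ?E"
    by (rule sets_pair_measure)
  have emeasure_pair: "emeasure ?M X =
      (if X \<in> sigma_sets ?\<Omega> ?E \<and> measure_space ?\<Omega> (sigma_sets ?\<Omega> ?E) ?\<mu> then ?\<mu> X else 0)" for X
    unfolding pair_measure_def emeasure_measure_of_conv by simp
  fix X assume "X \<in> sets (distr ?M ?M ?t)"
  then have X: "X \<in> sets ?M" by simp
  have X': "?t -` X \<inter> space ?M \<in> sets ?M"
    using measurable_sets[OF measurable_translate_fst X] .
  have "?\<mu> (?t -` X \<inter> space ?M) = (\<integral>\<^sup>+x. \<integral>\<^sup>+y. indicator X (x + b, y) \<partial>lam \<partial>nu)"
    by (intro nn_integral_cong) (auto simp: space_pair_measure space_eq_UNIV indicator_def)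
  also have "\<dots> = ?\<mu> X"
    by (rule nn_integral_translate[where F="\<lambda>x. \<integral>\<^sup>+y. indicator X (x, y) \<partial>lam"])
  finally have \<mu>_eq: "?\<mu> (?t -` X \<inter> space ?M) = ?\<mu> X" .
  have "emeasure (distr ?M ?M ?t) X = emeasure ?M (?t -` X \<inter> space ?M)"
    by (rule emeasure_distr[OF measurable_translate_fst X])
  also have "\<dots> = emeasure ?M X"
    unfolding emeasure_pair[of "?t -` X \<inter> space ?M"] emeasure_pair[of X]
    using X X' unfolding sets_M by (simp only: \<mu>_eq simp_thms)
  finally show "emeasure (distr ?M ?M ?t) X = emeasure ?M X" .
qed simp

lemma integral_translate_fst:
  fixes f :: "'g \<times> 'y \<Rightarrow> 'b::{banach, second_countable_topology}"
  assumes "f \<in> borel_measurable (nu \<Otimes>\<^sub>M lam)"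
  shows "(LINT z|(nu \<Otimes>\<^sub>M lam). f (fst z + b, snd z)) = (LINT z|(nu \<Otimes>\<^sub>M lam). f z)"
  using integral_distr[OF measurable_translate_fst assms] by (simp add: distr_translate_fst)

lemma integrable_translate_fst_iff:
  fixes f :: "'g \<times> 'y \<Rightarrow> 'b::{banach, second_countable_topology}"
  assumes "f \<in> borel_measurable (nu \<Otimes>\<^sub>M lam)"
  shows "integrable (nu \<Otimes>\<^sub>M lam) (\<lambda>z. f (fst z + b, snd z)) \<longleftrightarrow> integrable (nu \<Otimes>\<^sub>M lam) f"
  using integrable_distr_eq[OF measurable_translate_fst assms] by (simp add: distr_translate_fst)

lemma square_integrable_translate_fst:
  assumes "square_integrable (nu \<Otimes>\<^sub>M lam) f"
  shows "square_integrable (nu \<Otimes>\<^sub>M lam) (\<lambda>z. f (fst z + b, snd z))"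
    and "L2norm_sq (nu \<Otimes>\<^sub>M lam) (\<lambda>z. f (fst z + b, snd z)) = L2norm_sq (nu \<Otimes>\<^sub>M lam) f"
proof -
  have f: "f \<in> borel_measurable (nu \<Otimes>\<^sub>M lam)"
    using assms by (simp add: square_integrable_def)
  then have "(\<lambda>z. (cmod (f z))\<^sup>2) \<in> borel_measurable (nu \<Otimes>\<^sub>M lam)"
    by simp
  from integral_translate_fst[OF this] integrable_translate_fst_iff[OF this]
  show "square_integrable (nu \<Otimes>\<^sub>M lam) (\<lambda>z. f (fst z + b, snd z))"
    and "L2norm_sq (nu \<Otimes>\<^sub>M lam) (\<lambda>z. f (fst z + b, snd z)) = L2norm_sq (nu \<Otimes>\<^sub>M lam) f"
    using assms measurable_compose[OF measurable_translate_fst f]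
    by (simp_all add: square_integrable_def L2norm_sq_def)
qed

end

section \<open>Reproducing kernel spaces\<close>

lemma tendsto_zero_if_norm_sq_le:
  fixes c :: "nat \<Rightarrow> 'a::real_normed_vector"
  assumes bound: "\<And>n. (norm (c n))\<^sup>2 \<le> C * e n" and e: "e \<longlonglongrightarrow> 0"
  shows "c \<longlonglongrightarrow> 0"
proof (rule Lim_null_comparison)
  show "\<forall>\<^sub>F n in sequentially. norm (c n) \<le> sqrt (C * e n)"
    using real_sqrt_le_mono[OF bound] by (simp add: always_eventually)
  show "(\<lambda>n. sqrt (C * e n)) \<longlonglongrightarrow> 0"
    using tendsto_real_sqrt[OF tendsto_mult_right_zero[OF e, of C]] by simp
qed

lemma memH_cong:
  "memH H Y f \<Longrightarrow> (\<And>x y. y \<in> Y \<Longrightarrow> f (x, y) = g (x, y)) \<Longrightarrow> memH H Y g"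
  by (auto simp: memH_def)

locale reproducing_kernel_space =
  fixes nu :: "'g::{ab_group_add, t2_space} measure" and lam :: "'y measure"
    and H :: "('g \<times> 'y \<Rightarrow> complex) set" and K :: "'g \<Rightarrow> 'y \<Rightarrow> 'g \<times> 'y \<Rightarrow> complex"
  assumes rkhs: "rkhs nu lam H K"
begin

lemma square_integrable_H: "f \<in> H \<Longrightarrow> square_integrable (nu \<Otimes>\<^sub>M lam) f"
  using rkhs by (simp add: rkhs_def)

lemma zero_in_H: "(\<lambda>_. 0) \<in> H"
  using rkhs by (simp add: rkhs_def)

lemma add_in_H: "f \<in> H \<Longrightarrow> g \<in> H \<Longrightarrow> (\<lambda>z. f z + g z) \<in> H"
  using rkhs by (simp add: rkhs_def)

lemma cmult_in_H: "f \<in> H \<Longrightarrow> (\<lambda>z. c * f z) \<in> H"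
  using rkhs by (simp add: rkhs_def)

lemma kernel_in_H: "y \<in> space lam \<Longrightarrow> K x y \<in> H"
  using rkhs by (simp add: rkhs_def)

lemma reproducing: "f \<in> H \<Longrightarrow> y \<in> space lam \<Longrightarrow> f (x, y) = L2inner (nu \<Otimes>\<^sub>M lam) f (K x y)"
  using rkhs by (simp add: rkhs_def)

lemma Cauchy_limit_in_H:
  assumes "\<And>n. F n \<in> H"
    and "\<forall>e>0. \<exists>N. \<forall>m\<ge>N. \<forall>n\<ge>N. L2norm (nu \<Otimes>\<^sub>M lam) (\<lambda>z. F m z - F n z) < e"
  obtains f where "f \<in> H" "(\<lambda>n. L2norm (nu \<Otimes>\<^sub>M lam) (\<lambda>z. F n z - f z)) \<longlonglongrightarrow> 0"
  using rkhs assms unfolding rkhs_def by blast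

lemma kernel_cnj:
  assumes "y \<in> space lam" "v \<in> space lam"
  shows "K x y (u, v) = cnj (K u v (x, y))"
proof -
  have "K x y (u, v) = L2inner (nu \<Otimes>\<^sub>M lam) (K x y) (K u v)"
    using assms by (simp add: reproducing kernel_in_H)
  also have "\<dots> = cnj (L2inner (nu \<Otimes>\<^sub>M lam) (K u v) (K x y))"
    unfolding L2inner_def Bochner_Integration.integral_cnj[symmetric] by (simp add: mult.commute)
  also have "L2inner (nu \<Otimes>\<^sub>M lam) (K u v) (K x y) = K u v (x, y)"
    using assms by (simp add: reproducing kernel_in_H)
  finally show ?thesis .
qed

lemma tendsto_eval_if_L2norm_tendsto:
  assumes F: "\<And>n. F n \<in> H" and f: "f \<in> H" and y: "y \<in> space lam"
    and lim: "(\<lambda>n. L2norm (nu \<Otimes>\<^sub>M lam) (\<lambda>z. F n z - f z)) \<longlonglongrightarrow> 0"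
  shows "(\<lambda>n. F n (x, y)) \<longlonglongrightarrow> f (x, y)"
proof -
  let ?N = "L2norm_sq (nu \<Otimes>\<^sub>M lam) (K x y)"
  have "(norm (F n (x, y) - f (x, y)))\<^sup>2 \<le> (?N + 1) * (L2norm (nu \<Otimes>\<^sub>M lam) (\<lambda>z. F n z - f z))\<^sup>2" for n
  proof -
    have "F n (x, y) - f (x, y) = L2inner (nu \<Otimes>\<^sub>M lam) (\<lambda>z. F n z - f z) (K x y)"
      using y by (simp add: reproducing F f L2inner_diff_left square_integrable_H kernel_in_H)
    then show ?thesis
      using L2inner_sq_le[OF square_integrable_diff[OF square_integrable_H[OF F] square_integrable_H[OF f]]
          square_integrable_H[OF kernel_in_H[OF y]]]
      by (simp add: L2norm_eq_sqrt L2norm_sq_nonneg)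
  qed
  moreover have "(\<lambda>n. (L2norm (nu \<Otimes>\<^sub>M lam) (\<lambda>z. F n z - f z))\<^sup>2) \<longlonglongrightarrow> 0"
    using tendsto_power[OF lim, of 2] by simp
  ultimately have "(\<lambda>n. F n (x, y) - f (x, y)) \<longlonglongrightarrow> 0"
    by (rule tendsto_zero_if_norm_sq_le)
  then show ?thesis
    by (rule LIM_zero_cancel)
qed

text \<open>The midpoint of two near-minimizers lies in H, so the parallelogram law forces them to be
  close.\<close>
lemma near_minimizers_close:
  assumes g: "square_integrable (nu \<Otimes>\<^sub>M lam) g"
    and lower: "\<And>h. h \<in> H \<Longrightarrow> D \<le> L2norm_sq (nu \<Otimes>\<^sub>M lam) (\<lambda>z. g z - h z)"
    and f1: "f1 \<in> H" "L2norm_sq (nu \<Otimes>\<^sub>M lam) (\<lambda>z. g z - f1 z) \<le> D + e1"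
    and f2: "f2 \<in> H" "L2norm_sq (nu \<Otimes>\<^sub>M lam) (\<lambda>z. g z - f2 z) \<le> D + e2"
  shows "L2norm_sq (nu \<Otimes>\<^sub>M lam) (\<lambda>z. f1 z - f2 z) \<le> 2 * e1 + 2 * e2"
proof -
  let ?M = "nu \<Otimes>\<^sub>M lam"
  define m where "m = (\<lambda>z. (1/2) * (f1 z + f2 z))"
  have m: "m \<in> H"
    unfolding m_def by (intro cmult_in_H add_in_H f1 f2)
  have "g z + g z - f1 z - f2 z = 2 * (g z - m z)" for z
    unfolding m_def by (simp add: field_simps)
  then have "L2norm_sq ?M (\<lambda>z. g z + g z - f1 z - f2 z) = L2norm_sq ?M (\<lambda>z. 2 * (g z - m z))"
    by presburger
  also have "\<dots> = 4 * L2norm_sq ?M (\<lambda>z. g z - m z)"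
    using L2norm_sq_cmult[of ?M 2 "\<lambda>z. g z - m z"] by simp
  finally have midpoint: "L2norm_sq ?M (\<lambda>z. g z + g z - f1 z - f2 z) = 4 * L2norm_sq ?M (\<lambda>z. g z - m z)" .
  have "L2norm_sq ?M (\<lambda>z. f1 z - f2 z) = L2norm_sq ?M (\<lambda>z. (g z - f2 z) - (g z - f1 z))"
    by simp
  also have "\<dots> = 2 * L2norm_sq ?M (\<lambda>z. g z - f2 z) + 2 * L2norm_sq ?M (\<lambda>z. g z - f1 z)
      - 4 * L2norm_sq ?M (\<lambda>z. g z - m z)"
    using L2norm_sq_parallelogram[OF square_integrable_diff[OF g square_integrable_H[OF f2(1)]]
        square_integrable_diff[OF g square_integrable_H[OF f1(1)]]] midpoint
    by (simp add: algebra_simps)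
  finally show ?thesis
    using lower[OF m] f1(2) f2(2) by linarith
qed

lemma near_minimizing_sequence_Cauchy:
  assumes g: "square_integrable (nu \<Otimes>\<^sub>M lam) g"
    and lower: "\<And>h. h \<in> H \<Longrightarrow> D \<le> L2norm_sq (nu \<Otimes>\<^sub>M lam) (\<lambda>z. g z - h z)"
    and F: "\<And>n. F n \<in> H"
    and near: "\<And>n. L2norm_sq (nu \<Otimes>\<^sub>M lam) (\<lambda>z. g z - F n z) \<le> D + inverse (Suc n)"
  shows "\<forall>r>0. \<exists>N. \<forall>m\<ge>N. \<forall>n\<ge>N. L2norm (nu \<Otimes>\<^sub>M lam) (\<lambda>z. F m z - F n z) < r"
proof (intro allI impI)
  fix r :: real assume r: "r > 0"
  then obtain N where N: "\<And>n. n \<ge> N \<Longrightarrow> inverse (real (Suc n)) < r\<^sup>2 / 4"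
    using LIMSEQ_inverse_real_of_nat[unfolded LIMSEQ_iff, rule_format, of "r\<^sup>2 / 4"] by auto
  have "L2norm (nu \<Otimes>\<^sub>M lam) (\<lambda>z. F m z - F n z) < r" if "m \<ge> N" "n \<ge> N" for m n
  proof -
    have "L2norm_sq (nu \<Otimes>\<^sub>M lam) (\<lambda>z. F m z - F n z) < r\<^sup>2"
      using near_minimizers_close[OF g lower F near F near, of m n] N[OF that(1)] N[OF that(2)]
      by linarith
    then show ?thesis
      using r real_sqrt_less_mono by (fastforce simp: L2norm_eq_sqrt)
  qed
  then show "\<exists>N. \<forall>m\<ge>N. \<forall>n\<ge>N. L2norm (nu \<Otimes>\<^sub>M lam) (\<lambda>z. F m z - F n z) < r"
    by blast
qed

lemma near_minimizer_eval_close: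
  assumes g: "square_integrable (nu \<Otimes>\<^sub>M lam) g"
    and g_rep: "\<And>x y. y \<in> space lam \<Longrightarrow> g (x, y) = L2inner (nu \<Otimes>\<^sub>M lam) g (K x y)"
    and lower: "\<And>h. h \<in> H \<Longrightarrow> D \<le> L2norm_sq (nu \<Otimes>\<^sub>M lam) (\<lambda>z. g z - h z)"
    and f: "f \<in> H" "L2norm_sq (nu \<Otimes>\<^sub>M lam) (\<lambda>z. g z - f z) \<le> D + e"
    and y: "y \<in> space lam"
  shows "(cmod (g (x, y) - f (x, y)))\<^sup>2 \<le> (L2norm_sq (nu \<Otimes>\<^sub>M lam) (K x y) + 1) * e"
proof -
  let ?M = "nu \<Otimes>\<^sub>M lam"
  have w: "square_integrable ?M (\<lambda>z. g z - f z)"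
    by (rule square_integrable_diff[OF g square_integrable_H[OF f(1)]])
  have k: "square_integrable ?M (K x y)"
    by (rule square_integrable_H[OF kernel_in_H[OF y]])
  have "L2norm_sq ?M (\<lambda>z. g z - f z) - e \<le> L2norm_sq ?M (\<lambda>z. (g z - f z) - t * K x y z)" for t
  proof -
    have "(\<lambda>z. f z + t * K x y z) \<in> H"
      by (intro add_in_H cmult_in_H f(1) kernel_in_H y)
    from lower[OF this] show ?thesis
      using f(2) by (simp add: algebra_simps)
  qed
  from L2inner_sq_le_if_near_minimal[OF w k this]
  show ?thesis
    using y by (simp add: L2inner_diff_left[OF g square_integrable_H[OF f(1)] k] g_rep reproducing f(1))
qed

lemma memH_if_reproducing:
  assumes g: "square_integrable (nu \<Otimes>\<^sub>M lam) g"
    and g_rep: "\<And>x y. y \<in> space lam \<Longrightarrow> g (x, y) = L2inner (nu \<Otimes>\<^sub>M lam) g (K x y)"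
  shows "memH H (space lam) g"
proof -
  let ?M = "nu \<Otimes>\<^sub>M lam"
  let ?Q = "\<lambda>h. L2norm_sq ?M (\<lambda>z. g z - h z)"
  define D where "D = (INF h\<in>H. ?Q h)"
  have bdd: "bdd_below (?Q ` H)"
    by (rule bdd_belowI[of _ 0]) (auto simp: L2norm_sq_nonneg)
  have lower: "D \<le> ?Q h" if "h \<in> H" for h
    unfolding D_def using bdd that by (rule cINF_lower)
  have "\<exists>f\<in>H. ?Q f < D + inverse (Suc n)" for n
    using cINF_less_iff[OF _ bdd, of "D + inverse (Suc n)"] zero_in_H by (auto simp: D_def)
  then obtain F where F: "\<And>n. F n \<in> H" and near: "\<And>n. ?Q (F n) \<le> D + inverse (Suc n)"
    by (metis less_imp_le)
  have "\<forall>r>0. \<exists>N. \<forall>m\<ge>N. \<forall>n\<ge>N. L2norm ?M (\<lambda>z. F m z - F n z) < r"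
    by (rule near_minimizing_sequence_Cauchy[OF g lower F near])
  then obtain h where h: "h \<in> H" and lim: "(\<lambda>n. L2norm ?M (\<lambda>z. F n z - h z)) \<longlonglongrightarrow> 0"
    using Cauchy_limit_in_H F by blast
  have "h (x, y) = g (x, y)" if y: "y \<in> space lam" for x y
  proof -
    have "(\<lambda>n. F n (x, y)) \<longlonglongrightarrow> h (x, y)"
      by (rule tendsto_eval_if_L2norm_tendsto[OF F h y lim])
    moreover have "(\<lambda>n. F n (x, y) - g (x, y)) \<longlonglongrightarrow> 0"
      using near_minimizer_eval_close[OF g g_rep lower F near y]
      by (intro tendsto_zero_if_norm_sq_le[OF _ LIMSEQ_inverse_real_of_nat]) (simp add: norm_minus_commute)
    then have "(\<lambda>n. F n (x, y)) \<longlonglongrightarrow> g (x, y)"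
      by (rule LIM_zero_cancel)
    ultimately show ?thesis
      by (rule LIMSEQ_unique)
  qed
  then show ?thesis
    using h by (auto simp: memH_def)
qed

end

section \<open>Translation-covariant kernels\<close>

locale covariant_rkhs = reproducing_kernel_space nu lam H K + lca_haar nu
  for nu :: "'g::{ab_group_add, t2_space} measure" and lam H K +
  assumes covariant: "\<And>u x v y. v \<in> space lam \<Longrightarrow> y \<in> space lam \<Longrightarrow> K x y (u, v) = K 0 y (u - x, v)"
begin

lemma kernel_translate:
  "v \<in> space lam \<Longrightarrow> y \<in> space lam \<Longrightarrow> K (x + b) y (u + b, v) = K x y (u, v)"
  using covariant[where u="u + b" and x="x + b"] covariant[where u=u and x=x] by simp

lemma kernel_cnj_shift:
  assumes "y \<in> space lam" "v \<in> space lam"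
  shows "cnj (K (x - a) y (u, v)) = K a v (x - u, y)"
proof -
  have "cnj (K (x - a) y (u, v)) = K u v (x - a, y)"
    using kernel_cnj[OF assms] by simp
  also have "\<dots> = K (u + (a - u)) v (x - a + (a - u), y)"
    by (rule kernel_translate[OF assms, symmetric])
  also have "\<dots> = K a v (x - u, y)"
    by (simp add: algebra_simps)
  finally show ?thesis .
qed

lemma translate_memH:
  assumes f: "f \<in> H"
  shows "memH H (space lam) (\<lambda>z. f (fst z - a, snd z))"
proof (rule memH_if_reproducing)
  let ?M = "nu \<Otimes>\<^sub>M lam"
  show "square_integrable ?M (\<lambda>z. f (fst z - a, snd z))"
    using square_integrable_translate_fst(1)[OF square_integrable_H[OF f], of "- a"] by simp
  fix x y assume y: "y \<in> space lam"
  have "f \<in> borel_measurable ?M" "K (x - a) y \<in> borel_measurable ?M"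
    using square_integrable_H[OF f] square_integrable_H[OF kernel_in_H[OF y]]
    by (simp_all add: square_integrable_def)
  then have integrand: "(\<lambda>z. f z * cnj (K (x - a) y z)) \<in> borel_measurable ?M"
    by measurable
  have "f (x - a, y) = (CLINT z|?M. f z * cnj (K (x - a) y z))"
    using reproducing[OF f y] by (simp add: L2inner_def)
  also have "\<dots> = (CLINT z|?M. f (fst z - a, snd z) * cnj (K (x - a) y (fst z - a, snd z)))"
    using integral_translate_fst[OF integrand, of "- a"] by simp
  also have "\<dots> = L2inner ?M (\<lambda>z. f (fst z - a, snd z)) (K x y)"
    unfolding L2inner_def
    by (intro Bochner_Integration.integral_cong)
       (auto simp: space_pair_measure y kernel_translate[of _ y x "- a", simplified])
  finally show "f (fst (x, y) - a, snd (x, y)) = L2inner ?M (\<lambda>z. f (fst z - a, snd z)) (K x y)"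
    by simp
qed

lemma S_op_kernel_eq_translate:
  assumes f: "f \<in> H" and y: "y \<in> space lam"
  shows "S_op nu lam (\<lambda>x y v. K a v (x, y)) f (x, y) = f (x - a, y)"
proof -
  have "f (x - a, y) = (CLINT z|nu \<Otimes>\<^sub>M lam. f z * cnj (K (x - a) y z))"
    using reproducing[OF f y] by (simp add: L2inner_def)
  also have "\<dots> = (CLINT z|nu \<Otimes>\<^sub>M lam. f z * K a (snd z) (x - fst z, y))"
  proof (rule Bochner_Integration.integral_cong)
    fix z assume "z \<in> space (nu \<Otimes>\<^sub>M lam)"
    then obtain u v where z: "z = (u, v)" and v: "v \<in> space lam"
      by (auto simp: space_pair_measure)
    show "f z * cnj (K (x - a) y z) = f z * K a (snd z) (x - fst z, y)"
      using kernel_cnj_shift[OF y v] by (simp add: z)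
  qed simp
  finally show ?thesis
    by (simp add: S_op_def)
qed

lemma memH_S_op_kernel:
  assumes "f \<in> H"
  shows "memH H (space lam) (S_op nu lam (\<lambda>x y v. K a v (x, y)) f)"
  using translate_memH[OF assms, of a] by (rule memH_cong) (simp add: S_op_kernel_eq_translate assms)

lemma L2norm_S_op_kernel:
  assumes f: "f \<in> H"
  shows "L2norm (nu \<Otimes>\<^sub>M lam) (S_op nu lam (\<lambda>x y v. K a v (x, y)) f) = L2norm (nu \<Otimes>\<^sub>M lam) f"
proof -
  have "L2norm_sq (nu \<Otimes>\<^sub>M lam) (S_op nu lam (\<lambda>x y v. K a v (x, y)) f) =
      L2norm_sq (nu \<Otimes>\<^sub>M lam) (\<lambda>z. f (fst z + - a, snd z))"
    unfolding L2norm_sq_def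
    by (intro Bochner_Integration.integral_cong)
       (auto simp: space_pair_measure S_op_kernel_eq_translate[OF f])
  also have "\<dots> = L2norm_sq (nu \<Otimes>\<^sub>M lam) f"
    by (rule square_integrable_translate_fst(2)[OF square_integrable_H[OF f]])
  finally show ?thesis
    by (simp add: L2norm_eq_sqrt)
qed

lemma in_A0_kernel: "in_A0 lam H (\<lambda>x y v. K a v (x, y))"
  unfolding in_A0_def
proof (intro conjI ballI)
  fix v assume "v \<in> space lam"
  then show "memH H (space lam) (\<lambda>(x, y). K a v (x, y))"
    by (auto simp: memH_def intro!: bexI[OF _ kernel_in_H])
next
  fix y assume y: "y \<in> space lam"
  have "K (- a) y (u, v) = cnj (K a v (- u, y))" if v: "v \<in> space lam" for u v
    using arg_cong[OF kernel_cnj_shift[OF y v, where x=0], of cnj] by simp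
  then show "memH H (space lam) (\<lambda>(u, v). cnj (K a v (- u, y)))"
    by (auto simp: memH_def intro!: bexI[OF _ kernel_in_H[OF y]])
qed

end

theorem proposition6p2:
  fixes nu :: "'g::{ab_group_add, t2_space} measure"
    and lam :: "'y measure"
    and H :: "('g \<times> 'y \<Rightarrow> complex) set"
    and K :: "'g \<Rightarrow> 'y \<Rightarrow> 'g \<times> 'y \<Rightarrow> complex"
    and a :: 'g
  assumes "lca_group TYPE('g)"
    and "haar_measure nu"
    and "rkhs nu lam H K"
    and "\<forall>u x. \<forall>v\<in>space lam. \<forall>y\<in>space lam. K x y (u, v) = K 0 y (u - x, v)"
  shows "in_A nu lam H (\<lambda>x y v. K a v (x, y)) \<and>
         (\<forall>f\<in>H. \<forall>x. \<forall>y\<in>space lam. f (x - a, y) = S_op nu lam (\<lambda>x y v. K a v (x, y)) f (x, y))"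
proof -
  interpret covariant_rkhs nu lam H K
    by unfold_locales (use assms in blast)+
  have "in_A nu lam H (\<lambda>x y v. K a v (x, y))"
    unfolding in_A_def
  proof (intro conjI ballI exI[of _ 1])
    fix f assume "f \<in> H"
    then show "memH H (space lam) (S_op nu lam (\<lambda>x y v. K a v (x, y)) f)"
      and "L2norm (nu \<Otimes>\<^sub>M lam) (S_op nu lam (\<lambda>x y v. K a v (x, y)) f) \<le> 1 * L2norm (nu \<Otimes>\<^sub>M lam) f"
      by (simp_all add: memH_S_op_kernel L2norm_S_op_kernel)
  qed (rule in_A0_kernel)
  then show ?thesis
    by (simp add: S_op_kernel_eq_translate)
qed

end
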